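(* Let $G$ be a real $n\times m$ matrix, $\mathbf v\in\mathbb R^n$ and $f\in\mathbb R^{1\times m}$. Consider the linear program of maximizing $fx$ subject to $Gx\le\mathbf v$. Let $\widehat G\in\mathbb R^{(n+1)\times m}$ be $G$ with the row $-f$ appended, and for $h\in\mathbb R$ let $\widehat{\mathbf v}(h)\in\mathbb R^{n+1}$ be $\mathbf v$ with the entry $-h$ appended. Let $P$ be the nonnegative orthant of $\mathbb R^{n+1}$, and let $e_{n+1}$ be the $(n+1)$-th standard basis vector. Assume $\mathcal R(\widehat G)\cap P=\{0\}$, and assume that the linear program is feasible and attains its maximum value $h_o$. For $h\le h_o$ let $P_c(h)=(\widehat{\mathbf v}(h)+\mathcal R(\widehat G))\cap P$, which is a nonempty polytope. Fix $h\le h_o$ and let $h_m$ be the largest $(n+1)$-th component among the extreme points of $P_c(h)$. (i) Let $g_c$ be an extreme point of $P_c(h)$ with $(g_c)_{n+1}=h_m$, and set $y_o=g_c-h_m e_{n+1}$. Then $y_o$ is an extreme point of $P_c(h_o)$, the equation $\widehat G x=\widehat{\mathbf v}(h_o)-y_o$ has at least one solution, and every solution $x$ of it is an optimal solution of the linear program, that is, $Gx\le\mathbf v$ and $fx=h_o$. (ii) Let $g_1,\dots,g_p$ be the extreme points of $P_c(h_o)$. Then the set of all optimal solutions of the linear program equals $$\{x\in\mathbb R^m:\widehat G x=\widehat{\mathbf v}(h_o)-y \text{ for some } y\in\mathrm{conv}\{g_1,\dots,g_p\}\}.$$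
   Context: $\mathrm{conv}$ denotes convex hull. The paper writes $G,\mathbf v$ for the augmented objects $\widehat G,\widehat{\mathbf v}(h_o)$ in this statement. *)

theory Defs
  imports "HOL-Analysis.Analysis"
begin

text \<open>Indices of R^(n+1) are \<open>'n option\<close>: \<open>Some i\<close> are the original n coordinates,
  \<open>None\<close> is the appended (n+1)-th coordinate.\<close>

definition Ghat :: "real^'m^'n \<Rightarrow> real^'m \<Rightarrow> real^'m^('n option)" where
  "Ghat G f = (\<chi> i. case i of None \<Rightarrow> - f | Some j \<Rightarrow> G $ j)"

definition vhat :: "real^'n \<Rightarrow> real \<Rightarrow> real^('n option)" where
  "vhat v h = (\<chi> i. case i of None \<Rightarrow> - h | Some j \<Rightarrow> v $ j)"

definition nonneg_orthant :: "(real^'k) set" where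
  "nonneg_orthant = {y. \<forall>i. 0 \<le> y $ i}"

definition Pc :: "real^'m^'n \<Rightarrow> real^'m \<Rightarrow> real^'n \<Rightarrow> real \<Rightarrow> (real^('n option)) set" where
  "Pc G f v h = (\<lambda>r. vhat v h + r) ` range (\<lambda>x. Ghat G f *v x) \<inter> nonneg_orthant"

definition lp_feasible :: "real^'m^'n \<Rightarrow> real^'n \<Rightarrow> real^'m \<Rightarrow> bool" where
  "lp_feasible G v x \<longleftrightarrow> (\<forall>i. (G *v x) $ i \<le> v $ i)"

end

(*
  For every x the slack vhat v k - Ghat G f *v x is nonnegative exactly when G x <= v and
  f x >= k, and its last coordinate is f x - k; Pc G f v k consists precisely of these slacks.
  So on Pc G f v k the last coordinate is at most ho - k, with equality exactly at slacks of
  optimal solutions. As the range of Ghat G f meets the orthant only in 0, Pc G f v k is a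
  compact polyhedron, hence the convex hull of its finitely many extreme points; in particular
  hm = ho - h, and Pc G f v ho is the set of slacks of the optimal solutions. Finally,
  translation by (ho - h) e_(n+1) maps Pc G f v ho into Pc G f v h, so an extreme point of
  Pc G f v h at height hm translates down to an extreme point of Pc G f v ho.
*)

theory Submission
  imports Defs
begin

lemma bounded_translation_subspace_Int_cone:
  fixes V C :: "'a::euclidean_space set"
  assumes V: "subspace V" and "closed C" "cone C" and VC: "V \<inter> C \<subseteq> {0}"
  shows "bounded ((\<lambda>r. a + r) ` V \<inter> C)"
proof -
  \<comment> \<open>The unit vectors of \<open>C\<close> keep a positive distance \<open>\<delta>\<close> from \<open>V\<close>; for \<open>y = a + u \<in> C\<close>
    rescaling by \<open>1 / norm y\<close> gives \<open>\<delta> \<le> norm a / norm y\<close>.\<close>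
  define S where "S = sphere 0 1 \<inter> C"
  have "compact S"
    unfolding S_def using \<open>closed C\<close> by (simp add: compact_Int_closed)
  obtain \<delta> where "\<delta> > 0" and \<delta>: "\<And>d. d \<in> S \<Longrightarrow> \<delta> \<le> infdist d V"
  proof (cases "S = {}")
    case True
    then show ?thesis using that[of 1] by auto
  next
    case False
    obtain d0 where "d0 \<in> S" and d0: "\<And>d. d \<in> S \<Longrightarrow> infdist d0 V \<le> infdist d V"
    proof (rule continuous_attains_inf[OF \<open>compact S\<close> False, THEN bexE])
      show "continuous_on S (\<lambda>d. infdist d V)" by (intro continuous_intros)
    qed auto
    have "d0 \<notin> V" using \<open>d0 \<in> S\<close> VC unfolding S_def by auto
    then have "infdist d0 V > 0"
      using in_closed_iff_infdist_zero[OF closed_subspace[OF V]] subspace_0[OF V]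
        infdist_nonneg[of d0 V] by force
    then show ?thesis using that d0 by blast
  qed
  have "norm y \<le> norm a / \<delta>" if "y \<in> (\<lambda>r. a + r) ` V \<inter> C" for y
  proof (cases "y = 0")
    case True
    then show ?thesis using \<open>\<delta> > 0\<close> by simp
  next
    case False
    from that obtain u where "u \<in> V" "y = a + u" "y \<in> C" by auto
    have "(1 / norm y) *\<^sub>R y \<in> S"
      using \<open>y \<in> C\<close> \<open>cone C\<close> False unfolding S_def cone_def by simp
    then have "\<delta> \<le> infdist ((1 / norm y) *\<^sub>R y) V" by (rule \<delta>)
    also have "\<dots> \<le> dist ((1 / norm y) *\<^sub>R y) ((1 / norm y) *\<^sub>R u)"
      using \<open>u \<in> V\<close> V by (simp add: infdist_le subspace_scale)
    also have "\<dots> = norm a / norm y"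
      using False by (simp add: \<open>y = a + u\<close> dist_norm flip: scaleR_diff_right)
    finally show ?thesis using \<open>\<delta> > 0\<close> False by (simp add: field_simps)
  qed
  then show ?thesis unfolding bounded_iff by blast
qed

lemma extreme_point_of_subset:
  "x extreme_point_of S \<Longrightarrow> T \<subseteq> S \<Longrightarrow> x \<in> T \<Longrightarrow> x extreme_point_of T"
  by (auto simp: extreme_point_of_def)

lemma Max_inner_extreme_points:
  fixes S :: "'a::euclidean_space set"
  assumes "polyhedron S" "compact S" "y \<in> S" and max: "\<And>z. z \<in> S \<Longrightarrow> z \<bullet> a \<le> y \<bullet> a"
  shows "Max ((\<lambda>x. x \<bullet> a) ` {x. x extreme_point_of S}) = y \<bullet> a"
proof -
  define E where "E = {x. x extreme_point_of S}"
  have "finite E" unfolding E_def using \<open>polyhedron S\<close> by (rule finite_polyhedron_extreme_points)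
  have S: "S = convex hull E"
    unfolding E_def using \<open>compact S\<close> polyhedron_imp_convex[OF \<open>polyhedron S\<close>]
    by (rule Krein_Milman_Minkowski)
  then have "E \<noteq> {}" using \<open>y \<in> S\<close> by auto
  define M where "M = Max ((\<lambda>x. x \<bullet> a) ` E)"
  have "E \<subseteq> {x. x \<bullet> a \<le> M}"
    unfolding M_def using \<open>finite E\<close> by auto
  then have "S \<subseteq> {x. x \<bullet> a \<le> M}"
    unfolding S using convex_halfspace_le[of a M] by (intro hull_minimal) (auto simp: inner_commute)
  then have "y \<bullet> a \<le> M" using \<open>y \<in> S\<close> by auto
  moreover have "E \<subseteq> S" unfolding E_def by (auto simp: extreme_point_of_def)
  then have "M \<le> y \<bullet> a"
    unfolding M_def using \<open>finite E\<close> \<open>E \<noteq> {}\<close> max by auto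
  ultimately show ?thesis unfolding M_def E_def by simp
qed

lemma bex_eq_diff_iff:
  fixes a b :: "'a::ab_group_add"
  shows "(\<exists>y \<in> Y. b = a - y) \<longleftrightarrow> a - b \<in> Y"
  by (auto intro: bexI[where x = "a - b"])

lemma Ghat_mult_Some [simp]: "(Ghat G f *v x) $ Some j = (G *v x) $ j"
  by (simp add: Ghat_def matrix_vector_mult_def)

lemma Ghat_mult_None [simp]: "(Ghat G f *v x) $ None = - (f \<bullet> x)"
  by (simp add: Ghat_def matrix_vector_mult_def inner_vec_def sum_negf)

lemma vhat_Some [simp]: "vhat v h $ Some j = v $ j"
  by (simp add: vhat_def)

lemma vhat_None [simp]: "vhat v h $ None = - h"
  by (simp add: vhat_def)

lemma vhat_eq_plus_axis: "vhat v h = vhat v k + (k - h) *\<^sub>R axis None 1"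
  by (simp add: vec_eq_iff axis_def split_option_all)

lemma cone_nonneg_orthant: "cone nonneg_orthant"
  by (simp add: cone_def nonneg_orthant_def)

lemma polyhedron_nonneg_orthant: "polyhedron (nonneg_orthant :: (real^'k) set)"
proof -
  have "(nonneg_orthant :: (real^'k) set) = (\<Inter>i. {y. axis i 1 \<bullet> y \<ge> 0})"
    by (auto simp: nonneg_orthant_def cart_eq_inner_axis inner_commute)
  moreover have "polyhedron (\<Inter>i. {y::real^'k. axis i 1 \<bullet> y \<ge> 0})"
    by (rule polyhedron_Inter) (auto intro: polyhedron_halfspace_ge)
  ultimately show ?thesis by (simp only:)
qed

lemma slack_nonneg_iff:
  "vhat v k - Ghat G f *v x \<in> nonneg_orthant \<longleftrightarrow> lp_feasible G v x \<and> k \<le> f \<bullet> x"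
  by (auto simp: nonneg_orthant_def lp_feasible_def split_option_all)

lemma matrix_vector_mult_uminus_right:
  fixes A :: "'a::ring_1^'n^'m"
  shows "A *v (- x) = - (A *v x)"
  using matrix_vector_mult_diff_distrib[of A 0 x] by simp

lemma mem_Pc_iff:
  "y \<in> Pc G f v k \<longleftrightarrow> (\<exists>x. y = vhat v k - Ghat G f *v x) \<and> y \<in> nonneg_orthant"
proof -
  have "(\<exists>z. y = vhat v k + Ghat G f *v z) \<longleftrightarrow> (\<exists>x. y = vhat v k - Ghat G f *v x)"
    by (metis diff_conv_add_uminus matrix_vector_mult_uminus_right minus_minus)
  then show ?thesis by (auto simp: Pc_def)
qed

lemma slack_mem_Pc_iff:
  "vhat v k - Ghat G f *v x \<in> Pc G f v k \<longleftrightarrow> lp_feasible G v x \<and> k \<le> f \<bullet> x"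
  by (auto simp: mem_Pc_iff slack_nonneg_iff)

lemma polyhedron_Pc: "polyhedron (Pc G f v k)"
proof -
  have "affine ((\<lambda>r. vhat v k + r) ` range (\<lambda>x. Ghat G f *v x))"
    by (intro affine_translation[THEN iffD1] subspace_imp_affine linear_subspace_image) auto
  then show ?thesis
    unfolding Pc_def by (intro polyhedron_Int affine_imp_polyhedron polyhedron_nonneg_orthant)
qed

lemma compact_Pc:
  assumes "range (\<lambda>x. Ghat G f *v x) \<inter> nonneg_orthant = {0}"
  shows "compact (Pc G f v k)"
proof -
  have "bounded (Pc G f v k)"
    unfolding Pc_def using assms
    by (intro bounded_translation_subspace_Int_cone linear_subspace_image cone_nonneg_orthant
        polyhedron_imp_closed polyhedron_nonneg_orthant) auto
  then show ?thesis
    using polyhedron_Pc polyhedron_imp_closed compact_eq_bounded_closed by blast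
qed

lemma Pc_translation_subset:
  assumes "h \<le> k"
  shows "(\<lambda>y. (k - h) *\<^sub>R axis None 1 + y) ` Pc G f v k \<subseteq> Pc G f v h"
proof
  fix z assume "z \<in> (\<lambda>y. (k - h) *\<^sub>R axis None 1 + y) ` Pc G f v k"
  then obtain x where "lp_feasible G v x" "k \<le> f \<bullet> x"
    and z: "z = (k - h) *\<^sub>R axis None 1 + (vhat v k - Ghat G f *v x)"
    by (auto simp: mem_Pc_iff slack_nonneg_iff)
  then have "z = vhat v h - Ghat G f *v x"
    by (simp add: vhat_eq_plus_axis[of v h k])
  then show "z \<in> Pc G f v h"
    using \<open>lp_feasible G v x\<close> \<open>k \<le> f \<bullet> x\<close> assms by (simp add: slack_mem_Pc_iff)
qed

lemma extreme_point_Pc_translation: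
  fixes g :: "real^('n::finite) option"
  assumes "h \<le> k" and g: "g extreme_point_of Pc G f v h" "g $ None = k - h"
  shows "(g - (k - h) *\<^sub>R axis None 1) extreme_point_of Pc G f v k"
proof -
  define c where "c = (k - h) *\<^sub>R (axis None 1 :: real^'n option)"
  obtain x where x: "g = vhat v h - Ghat G f *v x" "lp_feasible G v x"
    using g by (auto simp: extreme_point_of_def mem_Pc_iff slack_nonneg_iff)
  then have "f \<bullet> x = k" using g(2) by simp
  have "g - c = vhat v k - Ghat G f *v x"
    by (simp add: x(1) c_def vhat_eq_plus_axis[of v h k])
  then have "g - c \<in> Pc G f v k"
    using x(2) \<open>f \<bullet> x = k\<close> by (simp add: slack_mem_Pc_iff)
  then have "g \<in> (\<lambda>y. c + y) ` Pc G f v k"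
    by (rule image_eqI[rotated]) simp
  then have "g extreme_point_of (\<lambda>y. c + y) ` Pc G f v k"
    using extreme_point_of_subset[OF g(1) Pc_translation_subset[OF \<open>h \<le> k\<close>]]
    by (simp add: c_def)
  then show ?thesis
    using extreme_point_of_translation_eq[of c "g - c"] by (simp add: c_def)
qed

lemma Max_None_extreme_points_Pc:
  assumes range_P: "range (\<lambda>x. Ghat G f *v x) \<inter> nonneg_orthant = {0}"
    and "lp_feasible G v x0" "f \<bullet> x0 = ho"
    and maximal: "\<forall>x. lp_feasible G v x \<longrightarrow> f \<bullet> x \<le> ho"
    and "h \<le> ho"
  shows "Max ((\<lambda>g. g $ None) ` {g. g extreme_point_of Pc G f v h}) = ho - h"
proof -
  have "vhat v h - Ghat G f *v x0 \<in> Pc G f v h"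
    using assms by (simp add: slack_mem_Pc_iff)
  moreover have "z $ None \<le> ho - h" if "z \<in> Pc G f v h" for z
    using that maximal by (auto simp: mem_Pc_iff slack_nonneg_iff)
  ultimately show ?thesis
    using Max_inner_extreme_points[OF polyhedron_Pc compact_Pc[OF range_P],
        where y = "vhat v h - Ghat G f *v x0" and a = "axis None 1"] \<open>f \<bullet> x0 = ho\<close>
    by (simp add: cart_eq_inner_axis[symmetric])
qed

lemma lp_optimal_iff_slack_mem_Pc:
  assumes "\<forall>x. lp_feasible G v x \<longrightarrow> f \<bullet> x \<le> ho"
  shows "lp_feasible G v x \<and> f \<bullet> x = ho \<longleftrightarrow> vhat v ho - Ghat G f *v x \<in> Pc G f v ho"
  using assms by (auto simp: slack_mem_Pc_iff)

lemma optimal_solutions_from_top_extreme_point: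
  assumes maximal: "\<forall>x. lp_feasible G v x \<longrightarrow> f \<bullet> x \<le> ho"
    and "h \<le> ho" "gc extreme_point_of Pc G f v h" "gc $ None = ho - h"
  defines "yo \<equiv> gc - (ho - h) *\<^sub>R axis None 1"
  shows "yo extreme_point_of Pc G f v ho"
    and "\<exists>x. Ghat G f *v x = vhat v ho - yo"
    and "\<And>x. Ghat G f *v x = vhat v ho - yo \<Longrightarrow> lp_feasible G v x \<and> f \<bullet> x = ho"
proof -
  show "yo extreme_point_of Pc G f v ho"
    unfolding yo_def using extreme_point_Pc_translation assms by blast
  then have "yo \<in> Pc G f v ho" by (simp add: extreme_point_of_def)
  then show "\<exists>x. Ghat G f *v x = vhat v ho - yo"
    by (auto simp: mem_Pc_iff)
  show "lp_feasible G v x \<and> f \<bullet> x = ho" if "Ghat G f *v x = vhat v ho - yo" for x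
    using lp_optimal_iff_slack_mem_Pc[OF maximal, of x] \<open>yo \<in> Pc G f v ho\<close> that by simp
qed

theorem mainTheorem5:
  fixes G :: "real^'m^'n" and v :: "real^'n" and f :: "real^'m" and h ho :: real
  assumes range_P: "range (\<lambda>x. Ghat G f *v x) \<inter> nonneg_orthant = {0}"
    and feasible: "\<exists>x. lp_feasible G v x"
    and attains: "\<exists>x. lp_feasible G v x \<and> f \<bullet> x = ho"
    and maximal: "\<forall>x. lp_feasible G v x \<longrightarrow> f \<bullet> x \<le> ho"
    and h_le: "h \<le> ho"
  defines "hm \<equiv> Max ((\<lambda>g. g $ None) ` {g. g extreme_point_of Pc G f v h})"
  shows "(\<forall>gc. gc extreme_point_of Pc G f v h \<and> gc $ None = hm \<longrightarrow>
            (let yo = gc - hm *\<^sub>R axis None 1 in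
               yo extreme_point_of Pc G f v ho
             \<and> (\<exists>x. Ghat G f *v x = vhat v ho - yo)
             \<and> (\<forall>x. Ghat G f *v x = vhat v ho - yo \<longrightarrow> lp_feasible G v x \<and> f \<bullet> x = ho)))
       \<and> {x. lp_feasible G v x \<and> f \<bullet> x = ho}
           = {x. \<exists>y \<in> convex hull {g. g extreme_point_of Pc G f v ho}.
                   Ghat G f *v x = vhat v ho - y}"
proof -
  have hm: "hm = ho - h"
    using attains Max_None_extreme_points_Pc[OF range_P _ _ maximal h_le] unfolding hm_def by blast
  have "convex hull {g. g extreme_point_of Pc G f v ho} = Pc G f v ho"
    using Krein_Milman_Minkowski[OF compact_Pc[OF range_P] polyhedron_imp_convex[OF polyhedron_Pc]]
    by simp
  then show ?thesis
    using optimal_solutions_from_top_extreme_point[OF maximal h_le]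
    unfolding hm Let_def by (auto simp: bex_eq_diff_iff lp_optimal_iff_slack_mem_Pc[OF maximal])
qed

end
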